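(* Let $M$ be a tall or square ACI-matrix over a field $\mathbb{F}$, and let $F_1,F_2$ be two disjoint semifactor sets of $M$. Then $F_1\cap F_2$ and $F_1\cup F_2$ are semifactor sets of $M$.
   Context: Let $\mathbb{F}$ be a field. An ACI-matrix is a matrix with entries in $\mathbb{F}[x_1,\dots,x_k]$ whose entries are polynomials of degree at most one and such that no indeterminate appears in two different columns. Tall/square means more rows than columns / equal numbers. A completion is an assignment of values in $\mathbb{F}$ to all indeterminates; $\mathrm{maxRank}(N)$ is the maximum rank of a completion. ACI-matrices (and blocks) of size $0\times q$ ($q>0$, wide degenerate), $p\times 0$ ($p>0$, tall degenerate) and $0\times0$ (void) are allowed. $N$ is FRmR if $\mathrm{maxRank}(N)=\mathrm{rows}(N)$, FCmR if $\mathrm{maxRank}(N)=\mathrm{cols}(N)$; by convention tall degenerate is FRmR, wide degenerate is FCmR, void is both. For an $m\times n$ block matrix $\begin{bmatrix} A & B\\ 0 & C\end{bmatrix}$ with lower-left $r\times s$ zero block, the zero block is Medium if $r+s=\max\{m,n\}$. For $F=\{f_1<\dots<f_s\}\subseteq\{1,\dots,n\}$ with complement $\{g_1<\dots<g_{n-s}\}$, $Q_F$ is the $n\times n$ permutation matrix such that $MQ_F$ has as columns $f_1,\dots,f_s,g_1,\dots,g_{n-s}$ of $M$ in that order. For an $m\times n$ ACI-matrix $M$, $F$ is a semifactor set of $M$ if there is a nonsingular constant $m\times m$ matrix $R$ with $RMQ_F=\begin{bmatrix} A & B\\ 0 & C\end{bmatrix}$, where $A$ has $\#F$ columns, the zero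 block is Medium, $A$ is FRmR and $C$ is FCmR. *)

theory Defs
  imports "Jordan_Normal_Form.DL_Rank"
begin

text \<open>An ACI-matrix with entries in F[x_0,...,x_(k-1)] of degree at most one is represented
  by its coefficient matrices: a pair (M0, [M1,...,Mk]) standing for
  M0 + x_0 M1 + ... + x_(k-1) Mk, all of the same size m x n.
  Two such representations denote the same polynomial matrix iff they are equal
  (padding with zero coefficient matrices aside).\<close>

type_synonym 'a aci = "'a mat \<times> 'a mat list"

definition aci_rows :: "'a aci \<Rightarrow> nat" where
  "aci_rows M = dim_row (fst M)"

definition aci_cols :: "'a aci \<Rightarrow> nat" where
  "aci_cols M = dim_col (fst M)"

text \<open>Well-formedness: all coefficient matrices have the same size, and each indeterminate
  appears in at most one column (its coefficient matrix is supported on a single column).\<close>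
definition is_aci :: "'a::zero aci \<Rightarrow> bool" where
  "is_aci M \<longleftrightarrow>
     (\<forall>B \<in> set (snd M). B \<in> carrier_mat (aci_rows M) (aci_cols M) \<and>
        (\<exists>j. \<forall>i < aci_rows M. \<forall>j' < aci_cols M. j' \<noteq> j \<longrightarrow> B $$ (i, j') = 0))"

definition aci_eval :: "'a::comm_ring_1 aci \<Rightarrow> (nat \<Rightarrow> 'a) \<Rightarrow> 'a mat" where
  "aci_eval M a = mat (aci_rows M) (aci_cols M)
     (\<lambda>(i, j). fst M $$ (i, j) + (\<Sum>v < length (snd M). a v * (snd M ! v) $$ (i, j)))"

definition mrank :: "'a::field mat \<Rightarrow> nat" where
  "mrank A = vec_space.rank (dim_row A) A"

definition maxRank :: "'a::field aci \<Rightarrow> nat" where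
  "maxRank M = Max (range (\<lambda>a. mrank (aci_eval M a)))"

definition FRmR :: "'a::field aci \<Rightarrow> bool" where
  "FRmR M \<longleftrightarrow> maxRank M = aci_rows M \<or> aci_cols M = 0"

definition FCmR :: "'a::field aci \<Rightarrow> bool" where
  "FCmR M \<longleftrightarrow> maxRank M = aci_cols M \<or> aci_rows M = 0"

definition aci_lmult :: "'a::semiring_0 mat \<Rightarrow> 'a aci \<Rightarrow> 'a aci" where
  "aci_lmult R M = (R * fst M, map (\<lambda>B. R * B) (snd M))"

definition aci_rmult :: "'a::semiring_0 aci \<Rightarrow> 'a mat \<Rightarrow> 'a aci" where
  "aci_rmult M Q = (fst M * Q, map (\<lambda>B. B * Q) (snd M))"

definition aci_block :: "'a aci \<Rightarrow> nat \<Rightarrow> nat \<Rightarrow> nat \<Rightarrow> nat \<Rightarrow> 'a aci" where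
  "aci_block M r0 r1 c0 c1 =
     (let blk = (\<lambda>B. mat (r1 - r0) (c1 - c0) (\<lambda>(i, j). B $$ (i + r0, j + c0)))
      in (blk (fst M), map blk (snd M)))"

text \<open>Permutation matrix Q_F (columns indexed 0..<n): M * Q_F has as columns
  f_1,...,f_s, g_1,...,g_(n-s) of M, in that order.\<close>
definition col_order :: "nat \<Rightarrow> nat set \<Rightarrow> nat list" where
  "col_order n F = sorted_list_of_set F @ sorted_list_of_set ({0..<n} - F)"

definition Qperm :: "nat \<Rightarrow> nat set \<Rightarrow> 'a::zero_neq_one mat" where
  "Qperm n F = mat n n (\<lambda>(i, j). if i = col_order n F ! j then 1 else 0)"

definition semifactor_set :: "'a::field aci \<Rightarrow> nat set \<Rightarrow> bool" where
  "semifactor_set M F \<longleftrightarrow>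
     (let m = aci_rows M; n = aci_cols M; s = card F in
      F \<subseteq> {0..<n} \<and>
      (\<exists>R r. R \<in> carrier_mat m m \<and> invertible_mat R \<and> r \<le> m \<and> r + s = max m n \<and>
         (let N = aci_rmult (aci_lmult R M) (Qperm n F) in
           (\<forall>i j. m - r \<le> i \<and> i < m \<and> j < s \<longrightarrow>
              fst N $$ (i, j) = 0 \<and> (\<forall>B \<in> set (snd N). B $$ (i, j) = 0)) \<and>
           FRmR (aci_block N 0 (m - r) 0 s) \<and>
           FCmR (aci_block N (m - r) m s n))))"

end

theory Submission
  imports Defs
begin

text \<open>Once M has a semifactor set it has a completion X of full column rank: every indeterminate
  lives in a single column, so the completions witnessing that A is FRmR and that C is FCmR can be
  merged column by column, and a block upper triangular matrix with injective diagonal blocks is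
  injective. For tall M and such a fixed X, F is a semifactor set if and only if every
  coefficient column of M indexed by F is a combination of the columns of X indexed by F.
  Necessity: R sends these coefficient columns into the first #F coordinates, where the
  columns of R X Q_F indexed by F form an invertible block. Sufficiency: Gauss-Jordan
  elimination of X Q_F yields R with R X Q_F equal to the identity on top of a zero
  block. The column condition is obviously inherited by unions and holds for the empty set.\<close>

section \<open>Full column rank\<close>

definition full_col_rank :: "'a::field mat \<Rightarrow> bool" where
  "full_col_rank A \<longleftrightarrow>
     (\<forall>v \<in> carrier_vec (dim_col A). A *\<^sub>v v = 0\<^sub>v (dim_row A) \<longrightarrow> v = 0\<^sub>v (dim_col A))"

lemma full_col_rankI:
  assumes "A \<in> carrier_mat m n" and "\<And>v. v \<in> carrier_vec n \<Longrightarrow> A *\<^sub>v v = 0\<^sub>v m \<Longrightarrow> v = 0\<^sub>v n"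
  shows "full_col_rank A"
  using assms unfolding full_col_rank_def by (metis carrier_matD(1,2))

lemma full_col_rankD:
  assumes "full_col_rank A" and "A \<in> carrier_mat m n"
    and "v \<in> carrier_vec n" and "A *\<^sub>v v = 0\<^sub>v m"
  shows "v = 0\<^sub>v n"
  using assms unfolding full_col_rank_def by (metis carrier_matD(1,2))

lemma full_col_rank_if_dim_col_0: "dim_col A = 0 \<Longrightarrow> full_col_rank A"
  unfolding full_col_rank_def by auto

lemma full_col_rank_distinct_cols:
  assumes A: "A \<in> carrier_mat n nc" and full: "full_col_rank A"
  shows "distinct (cols A)"
proof (rule ccontr)
  assume "\<not> distinct (cols A)"
  then obtain i j where ij: "i < nc" "j < nc" "i \<noteq> j" "col A i = col A j"
    using A by (auto simp: distinct_conv_nth)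
  define v :: "'a vec" where "v = unit_vec nc i - unit_vec nc j"
  have unit: "A *\<^sub>v unit_vec nc k = col A k" if "k < nc" for k
    using A that by (intro eq_vecI) auto
  have "A *\<^sub>v v = col A i - col A j"
    using A ij unit unfolding v_def by (simp add: mult_minus_distrib_mat_vec)
  then have "A *\<^sub>v v = 0\<^sub>v n"
    using A ij(4) by (metis carrier_matD(1) col_dim minus_cancel_vec)
  moreover have "v \<in> carrier_vec nc" unfolding v_def by simp
  ultimately have "v = 0\<^sub>v nc" using full_col_rankD[OF full A] by blast
  moreover have "v $ i = 1" using ij unfolding v_def by simp
  ultimately show False using ij by simp
qed

lemma (in vec_space) rank_le_card_set_cols:
  assumes "A \<in> carrier_mat n nc"
  shows "rank A \<le> card (set (cols A))"
proof -
  obtain S where S: "maximal S (\<lambda>T. T \<subseteq> set (cols A) \<and> lin_indpt T)"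
    using maximal_exists[of "\<lambda>T. T \<subseteq> set (cols A) \<and> lin_indpt T" "card (set (cols A))" "{}"]
    by (meson List.finite_set card_mono empty_iff empty_subsetI finite_lin_indpt2 rev_finite_subset)
  then have "card S \<le> card (set (cols A))" by (simp add: card_mono maximal_def)
  then show ?thesis using rank_card_indpt[OF assms S] by simp
qed

lemma (in vec_space) rank_eq_dim_col_iff_full_col_rank:
  assumes A: "A \<in> carrier_mat n nc"
  shows "rank A = nc \<longleftrightarrow> full_col_rank A"
proof
  assume rank: "rank A = nc"
  have distinct: "distinct (cols A)"
  proof (rule ccontr)
    assume "\<not> distinct (cols A)"
    then have "card (set (cols A)) < length (cols A)"
      using card_distinct card_length nat_less_le by blast
    then show False using rank_le_card_set_cols[OF A] rank A by auto
  qed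
  have indpt: "lin_indpt (set (cols A))" using full_rank_lin_indpt[OF A rank distinct] .
  show "full_col_rank A"
  proof (rule full_col_rankI[OF A], rule ccontr)
    fix v assume "v \<in> carrier_vec nc" "A *\<^sub>v v = 0\<^sub>v n" "v \<noteq> 0\<^sub>v nc"
    then show False using lin_depI[OF A _ _ _ distinct] indpt by blast
  qed
next
  assume full: "full_col_rank A"
  note distinct = full_col_rank_distinct_cols[OF A full]
  have "lin_indpt (set (cols A))"
  proof
    assume "lin_dep (set (cols A))"
    from lin_depE[OF A this distinct] obtain v
      where "v \<in> carrier_vec nc" "v \<noteq> 0\<^sub>v nc" "A *\<^sub>v v = 0\<^sub>v n" .
    then show False using full_col_rankD[OF full A] by blast
  qed
  then show "rank A = nc" using lin_indpt_full_rank[OF A distinct] by blast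
qed

lemma mult_mat_zero_vec[simp]: "A \<in> carrier_mat m n \<Longrightarrow> A *\<^sub>v 0\<^sub>v n = 0\<^sub>v m"
  by (intro eq_vecI) (auto simp: scalar_prod_def)

lemma full_col_rank_mult:
  assumes A: "A \<in> carrier_mat m k" and B: "B \<in> carrier_mat k n"
    and "full_col_rank A" and "full_col_rank B"
  shows "full_col_rank (A * B)"
proof (rule full_col_rankI)
  show "A * B \<in> carrier_mat m n" using A B by simp
  fix v assume v: "v \<in> carrier_vec n" and "A * B *\<^sub>v v = 0\<^sub>v m"
  then have "A *\<^sub>v (B *\<^sub>v v) = 0\<^sub>v m" using A B by simp
  then have "B *\<^sub>v v = 0\<^sub>v k" using full_col_rankD[OF \<open>full_col_rank A\<close> A] B v by simp
  then show "v = 0\<^sub>v n" using full_col_rankD[OF \<open>full_col_rank B\<close> B v] by simp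
qed

lemma full_col_rank_right_factor:
  assumes A: "A \<in> carrier_mat m k" and B: "B \<in> carrier_mat k n"
    and "full_col_rank (A * B)"
  shows "full_col_rank B"
proof (rule full_col_rankI[OF B])
  fix v assume v: "v \<in> carrier_vec n" and "B *\<^sub>v v = 0\<^sub>v k"
  then have "A * B *\<^sub>v v = 0\<^sub>v m" using A B by simp
  then show "v = 0\<^sub>v n"
    using full_col_rankD[OF \<open>full_col_rank (A * B)\<close> mult_carrier_mat[OF A B] v] by blast
qed

lemma invertible_matE:
  assumes R: "R \<in> carrier_mat n n" and "invertible_mat R"
  obtains S where "S \<in> carrier_mat n n" "S * R = 1\<^sub>m n" "R * S = 1\<^sub>m n"
proof -
  from assms obtain S where RS: "R * S = 1\<^sub>m n" and SR: "S * R = 1\<^sub>m (dim_row S)"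
    unfolding invertible_mat_def inverts_mat_def carrier_matD[OF R] by blast
  have "dim_row S = n" using arg_cong[OF SR, of dim_col] R by simp
  moreover have "dim_col S = n" using arg_cong[OF RS, of dim_col] by simp
  ultimately have S: "S \<in> carrier_mat n n" by (rule carrier_matI)
  show thesis using that[OF S _ RS] SR S by simp
qed

lemma invertible_matI:
  assumes R: "R \<in> carrier_mat n n" and S: "S \<in> carrier_mat n n" and SR: "S * R = 1\<^sub>m n"
  shows "invertible_mat (R :: 'a::field mat)"
proof -
  have "R * S = 1\<^sub>m n" using mat_mult_left_right_inverse[OF S R SR] .
  then show ?thesis unfolding invertible_mat_def inverts_mat_def
    using R S SR by (intro conjI exI[of _ S]) simp_all
qed

lemma invertible_full_col_rank:
  assumes R: "R \<in> carrier_mat n n" and "invertible_mat (R :: 'a::field mat)"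
  shows "full_col_rank R"
proof -
  obtain S where S: "S \<in> carrier_mat n n" "S * R = 1\<^sub>m n" "R * S = 1\<^sub>m n"
    using invertible_matE[OF assms] .
  have "full_col_rank (S * R)" unfolding S(2) full_col_rank_def by auto
  then show ?thesis using full_col_rank_right_factor[OF S(1) R] by simp
qed

lemma full_col_rank_mult_invertible_iff:
  fixes X :: "'a::field mat"
  assumes X: "X \<in> carrier_mat m n" and R: "R \<in> carrier_mat m m" "invertible_mat R"
    and Q: "Q \<in> carrier_mat n n" "invertible_mat Q"
  shows "full_col_rank (R * X * Q) \<longleftrightarrow> full_col_rank X"
proof
  obtain S where S: "S \<in> carrier_mat n n" "S * Q = 1\<^sub>m n" "Q * S = 1\<^sub>m n"
    using invertible_matE[OF Q] .
  have RXQ: "R * X * Q \<in> carrier_mat m n" using R X Q by simp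
  assume "full_col_rank (R * X * Q)"
  then have "full_col_rank (R * X * Q * S)"
    using full_col_rank_mult[OF RXQ S(1)] invertible_full_col_rank[OF S(1)]
      invertible_matI[OF S(1) Q(1) S(3)] by blast
  also have "R * X * Q * S = R * X * (Q * S)"
    using R X Q S by (intro assoc_mult_mat[of _ m n]) auto
  also have "\<dots> = R * X" using R X S by simp
  finally show "full_col_rank X" using full_col_rank_right_factor R X by blast
next
  assume "full_col_rank X"
  then have "full_col_rank (R * X)"
    using full_col_rank_mult[OF R(1) X] invertible_full_col_rank[OF R] by blast
  then show "full_col_rank (R * X * Q)"
    using full_col_rank_mult[OF mult_carrier_mat[OF R(1) X] Q(1)] invertible_full_col_rank[OF Q]
    by blast
qed

section \<open>Block upper triangular matrices\<close>

definition block_mat :: "'a mat \<Rightarrow> nat \<Rightarrow> nat \<Rightarrow> nat \<Rightarrow> nat \<Rightarrow> 'a mat" where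
  "block_mat X r0 r1 c0 c1 = mat (r1 - r0) (c1 - c0) (\<lambda>(i, j). X $$ (i + r0, j + c0))"

lemma block_mat_carrier[simp]: "block_mat X r0 r1 c0 c1 \<in> carrier_mat (r1 - r0) (c1 - c0)"
  and dim_block_mat[simp]: "dim_row (block_mat X r0 r1 c0 c1) = r1 - r0"
    "dim_col (block_mat X r0 r1 c0 c1) = c1 - c0"
  unfolding block_mat_def by simp_all

lemma index_block_mat[simp]:
  "i < r1 - r0 \<Longrightarrow> j < c1 - c0 \<Longrightarrow> block_mat X r0 r1 c0 c1 $$ (i, j) = X $$ (i + r0, j + c0)"
  unfolding block_mat_def by simp

definition lower_left_zero :: "'a::zero mat \<Rightarrow> nat \<Rightarrow> bool" where
  "lower_left_zero X s \<longleftrightarrow> (\<forall>i j. s \<le> i \<and> i < dim_row X \<and> j < s \<longrightarrow> X $$ (i, j) = 0)"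

lemma mult_mat_vec_index_split:
  assumes "X \<in> carrier_mat m n" "v \<in> carrier_vec n" "i < m" "s \<le> n"
  shows "(X *\<^sub>v v) $ i = (\<Sum>j\<in>{0..<s}. X $$ (i, j) * v $ j)
    + (\<Sum>j\<in>{0..<n - s}. X $$ (i, j + s) * v $ (j + s))"
proof -
  let ?f = "\<lambda>j. X $$ (i, j) * v $ j"
  have "(X *\<^sub>v v) $ i = sum ?f {0..<n}" using assms by (simp add: scalar_prod_def)
  also have "\<dots> = sum ?f {0..<s} + sum ?f {s..<n}"
    using sum.atLeastLessThan_concat[of 0 s n ?f] assms(4) by simp
  also have "sum ?f {s..<n} = (\<Sum>j\<in>{0..<n - s}. ?f (j + s))"
    using sum.shift_bounds_nat_ivl[of ?f 0 s "n - s"] assms(4) by simp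
  finally show ?thesis .
qed

lemma upper_left_block_carrier[simp]: "block_mat X 0 s 0 s \<in> carrier_mat s s"
  using block_mat_carrier[of X 0 s 0 s] by simp

lemma zero_vec_append: "s \<le> n \<Longrightarrow> 0\<^sub>v s @\<^sub>v 0\<^sub>v (n - s) = (0\<^sub>v n :: 'a::zero vec)"
  by (intro eq_vecI) auto

lemma append_zero_carrier_vec: "u \<in> carrier_vec s \<Longrightarrow> s \<le> n \<Longrightarrow> u @\<^sub>v 0\<^sub>v (n - s) \<in> carrier_vec n"
  using append_carrier_vec[of u s "0\<^sub>v (n - s)" "n - s"] by simp

lemma lower_left_zero_mult_append_zero:
  assumes X: "X \<in> carrier_mat m n" and s: "s \<le> m" "s \<le> n" and zero: "lower_left_zero X s"
    and u: "u \<in> carrier_vec s"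
  shows "X *\<^sub>v (u @\<^sub>v 0\<^sub>v (n - s)) = (block_mat X 0 s 0 s *\<^sub>v u) @\<^sub>v 0\<^sub>v (m - s)"
proof (rule eq_vecI)
  fix i assume "i < dim_vec ((block_mat X 0 s 0 s *\<^sub>v u) @\<^sub>v 0\<^sub>v (m - s))"
  then have i: "i < m" using s by simp
  have v: "u @\<^sub>v 0\<^sub>v (n - s) \<in> carrier_vec n" using append_zero_carrier_vec[OF u s(2)] .
  have "(\<Sum>j\<in>{0..<s}. X $$ (i, j) * (u @\<^sub>v 0\<^sub>v (n - s)) $ j) = (\<Sum>j\<in>{0..<s}. X $$ (i, j) * u $ j)"
    using u by (intro sum.cong) auto
  moreover have "(\<Sum>j\<in>{0..<n - s}. X $$ (i, j + s) * (u @\<^sub>v 0\<^sub>v (n - s)) $ (j + s)) = 0"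
    using u by (intro sum.neutral) auto
  ultimately have Xu: "(X *\<^sub>v (u @\<^sub>v 0\<^sub>v (n - s))) $ i = (\<Sum>j\<in>{0..<s}. X $$ (i, j) * u $ j)"
    using mult_mat_vec_index_split[OF X v i s(2)] by simp
  show "(X *\<^sub>v (u @\<^sub>v 0\<^sub>v (n - s))) $ i = ((block_mat X 0 s 0 s *\<^sub>v u) @\<^sub>v 0\<^sub>v (m - s)) $ i"
  proof (cases "i < s")
    case True
    then show ?thesis using Xu u by (simp add: block_mat_def scalar_prod_def)
  next
    case False
    then show ?thesis using Xu u s i zero X unfolding lower_left_zero_def by simp
  qed
qed (use X s u in simp)

lemma lower_left_zero_mult_vec_lower_index:
  assumes X: "X \<in> carrier_mat m n" and s: "s \<le> n" and zero: "lower_left_zero X s"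
    and v: "v \<in> carrier_vec n" and i: "i < m - s"
  shows "(X *\<^sub>v v) $ (i + s) = (block_mat X s m s n *\<^sub>v vec (n - s) (\<lambda>j. v $ (j + s))) $ i"
proof -
  have "(\<Sum>j\<in>{0..<s}. X $$ (i + s, j) * v $ j) = 0"
    using zero X i unfolding lower_left_zero_def by (intro sum.neutral) auto
  then show ?thesis
    using mult_mat_vec_index_split[OF X v _ s, of "i + s"] i by (simp add: block_mat_def scalar_prod_def)
qed

lemma full_col_rank_block_triangular:
  assumes X: "X \<in> carrier_mat m n" and s: "s \<le> m" "s \<le> n" and zero: "lower_left_zero X s"
    and full_upper: "full_col_rank (block_mat X 0 s 0 s)"
    and full_lower: "full_col_rank (block_mat X s m s n)"
  shows "full_col_rank X"
proof (rule full_col_rankI[OF X])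
  fix v assume v: "v \<in> carrier_vec n" and Xv: "X *\<^sub>v v = 0\<^sub>v m"
  define v_lower where "v_lower = vec (n - s) (\<lambda>j. v $ (j + s))"
  have "block_mat X s m s n *\<^sub>v v_lower = 0\<^sub>v (m - s)"
  proof (rule eq_vecI)
    fix i assume "i < dim_vec (0\<^sub>v (m - s) :: 'a vec)"
    then show "(block_mat X s m s n *\<^sub>v v_lower) $ i = 0\<^sub>v (m - s) $ i"
      using lower_left_zero_mult_vec_lower_index[OF X s(2) zero v, of i] Xv
      unfolding v_lower_def by simp
  qed simp
  then have "v_lower = 0\<^sub>v (n - s)"
    using full_col_rankD[OF full_lower block_mat_carrier] by (simp add: v_lower_def)
  then have "v $ j = 0" if "s \<le> j" "j < n" for j
  proof -
    have "j - s + s = j" "j - s < n - s" using that by auto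
    then have "v_lower $ (j - s) = v $ j" by (simp add: v_lower_def)
    then show ?thesis using \<open>v_lower = 0\<^sub>v (n - s)\<close> that by simp
  qed
  then have v_eq: "v = vec_first v s @\<^sub>v 0\<^sub>v (n - s)"
    using v s by (intro eq_vecI) (auto simp: vec_first_def)
  have "(block_mat X 0 s 0 s *\<^sub>v vec_first v s) @\<^sub>v 0\<^sub>v (m - s) = X *\<^sub>v v"
    using lower_left_zero_mult_append_zero[OF X s zero vec_first_carrier[of v s]]
    by (simp only: v_eq[symmetric])
  also have "\<dots> = 0\<^sub>v s @\<^sub>v 0\<^sub>v (m - s)" unfolding zero_vec_append[OF s(1)] by (rule Xv)
  finally have "block_mat X 0 s 0 s *\<^sub>v vec_first v s = 0\<^sub>v s"
    by (simp add: append_vec_eq[OF mult_mat_vec_carrier[OF upper_left_block_carrier vec_first_carrier]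
        zero_carrier_vec])
  then have "vec_first v s = 0\<^sub>v s"
    using full_col_rankD[OF full_upper upper_left_block_carrier vec_first_carrier] by simp
  then show "v = 0\<^sub>v n" using v_eq zero_vec_append[OF s(2)] by simp
qed

lemma full_col_rank_upper_left_block:
  assumes X: "X \<in> carrier_mat m n" and s: "s \<le> m" "s \<le> n" and zero: "lower_left_zero X s"
    and full: "full_col_rank X"
  shows "full_col_rank (block_mat X 0 s 0 s)"
proof (rule full_col_rankI[OF upper_left_block_carrier])
  fix u assume u: "u \<in> carrier_vec s" and "block_mat X 0 s 0 s *\<^sub>v u = 0\<^sub>v s"
  then have "X *\<^sub>v (u @\<^sub>v 0\<^sub>v (n - s)) = 0\<^sub>v m"
    using lower_left_zero_mult_append_zero[OF X s zero u] zero_vec_append[OF s(1)] by simp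
  then have "u @\<^sub>v 0\<^sub>v (n - s) = 0\<^sub>v n"
    by (rule full_col_rankD[OF full X append_zero_carrier_vec[OF u s(2)]])
  then have "u @\<^sub>v 0\<^sub>v (n - s) = 0\<^sub>v s @\<^sub>v 0\<^sub>v (n - s)" unfolding zero_vec_append[OF s(2)] .
  then show "u = 0\<^sub>v s" by (simp add: append_vec_eq[OF u zero_carrier_vec])
qed

lemma full_col_rank_square_solvable:
  fixes A :: "'a::field mat"
  assumes A: "A \<in> carrier_mat s s" and full: "full_col_rank A" and u: "u \<in> carrier_vec s"
  obtains z where "z \<in> carrier_vec s" "A *\<^sub>v z = u"
proof -
  have "det A \<noteq> 0"
    using det_0_iff_vec_prod_zero_field[OF A] full_col_rankD[OF full A] by blast
  from det_non_zero_imp_unit[OF A this, of "()"] obtain B where B: "B \<in> carrier_mat s s" "A * B = 1\<^sub>m s"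
    unfolding Units_def ring_mat_def by auto
  have "A *\<^sub>v (B *\<^sub>v u) = u" using A B u by (simp add: assoc_mult_mat_vec[symmetric])
  then show thesis using B u by (intro that[of "B *\<^sub>v u"]) auto
qed

lemma full_col_rank_lower_left_zero_solvable:
  assumes X: "X \<in> carrier_mat m n" and s: "s \<le> m" "s \<le> n" and zero: "lower_left_zero X s"
    and full: "full_col_rank X"
    and w: "w \<in> carrier_vec m" and w_lower: "\<And>i. s \<le> i \<Longrightarrow> i < m \<Longrightarrow> w $ i = 0"
  obtains z where "z \<in> carrier_vec n" "\<And>j. s \<le> j \<Longrightarrow> j < n \<Longrightarrow> z $ j = 0" "X *\<^sub>v z = w"
proof -
  obtain z where z: "z \<in> carrier_vec s" "block_mat X 0 s 0 s *\<^sub>v z = vec_first w s"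
    using full_col_rank_square_solvable[OF upper_left_block_carrier
        full_col_rank_upper_left_block[OF X s zero full]]
    by (metis vec_first_carrier)
  have "X *\<^sub>v (z @\<^sub>v 0\<^sub>v (n - s)) = vec_first w s @\<^sub>v 0\<^sub>v (m - s)"
    using lower_left_zero_mult_append_zero[OF X s zero z(1)] z(2) by simp
  also have "\<dots> = w"
    using w w_lower s by (intro eq_vecI) (auto simp: vec_first_def)
  finally show thesis
    using z(1) s by (intro that[of "z @\<^sub>v 0\<^sub>v (n - s)"] append_zero_carrier_vec) auto
qed

section \<open>Row reduction to the identity\<close>

abbreviation rect_one_mat :: "nat \<Rightarrow> nat \<Rightarrow> 'a::{zero, one} mat" where
  "rect_one_mat m n \<equiv> mat m n (\<lambda>(i, j). if i = j then 1 else 0)"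

lemma rect_one_mult_vec_index:
  assumes "(v :: 'a::semiring_1 vec) \<in> carrier_vec n" "i < m"
  shows "(rect_one_mat m n *\<^sub>v v) $ i = (if i < n then v $ i else 0)"
  using assms by (simp add: scalar_prod_def if_distrib[of "\<lambda>x. x * _"] cong: if_cong)

lemma full_col_rank_rect_one:
  assumes "n \<le> m"
  shows "full_col_rank (rect_one_mat m n :: 'a::field mat)"
proof (rule full_col_rankI)
  fix v :: "'a vec" assume v: "v \<in> carrier_vec n"
    and zero: "rect_one_mat m n *\<^sub>v v = 0\<^sub>v m"
  show "v = 0\<^sub>v n"
  proof (rule eq_vecI)
    fix j assume "j < dim_vec (0\<^sub>v n :: 'a vec)"
    then show "v $ j = 0\<^sub>v n $ j"
      using rect_one_mult_vec_index[OF v, of j m] zero assms by simp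
  qed (use v in simp)
qed simp

lemma block_mat_rect_one:
  assumes "r1 \<le> m" "c1 \<le> n"
  shows "block_mat (rect_one_mat m n) r0 r1 r0 c1
    = rect_one_mat (r1 - r0) (c1 - r0)"
  using assms unfolding block_mat_def by (intro eq_matI) auto

text \<open>A column without a pivot would yield a nonzero kernel vector, and pivots move strictly
  to the right, so the pivot of row j sits in column j.\<close>

lemma pivot_fun_full_col_rank:
  fixes C :: "'a::field mat"
  assumes C: "C \<in> carrier_mat m n" and ref: "row_echelon_form C" and piv: "pivot_fun C f n"
    and full: "full_col_rank C" and j: "j < n"
  shows "j < m" "f j = j"
proof -
  have dim: "dim_row C = m" using C by simp
  note pivot = pivot_funD[OF dim piv]
  let ?I = "{i. i < m \<and> f i \<noteq> n}"
  have all_pivots: "snd ` set (pivot_positions C) = {0..<n}"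
  proof (rule ccontr)
    assume "snd ` set (pivot_positions C) \<noteq> {0..<n}"
    note base = find_base_vector[OF ref C this]
    show False using full_col_rankD[OF full C base(1,3)] base(2) by simp
  qed
  have "f ` ?I = {0..<n}"
  proof -
    have "snd ` {(i, f i) | i. i < m \<and> f i \<noteq> n} = f ` ?I" by force
    then show ?thesis using all_pivots pivot_positions(1)[OF C piv] by simp
  qed
  have f_ge: "i \<le> f i" if "i < m" "f i \<noteq> n" for i
    using pivot_bound[OF dim piv, of 0 i] that by auto
  have "?I \<subseteq> {0..<n}"
  proof
    fix i assume i: "i \<in> ?I"
    then have "f i < n" using pivot(1)[of i] by auto
    then show "i \<in> {0..<n}" using f_ge[of i] i by auto
  qed
  moreover have "card {0..<n} \<le> card ?I"
    using \<open>f ` ?I = {0..<n}\<close> card_image_le[of ?I f] by simp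
  ultimately have I: "?I = {0..<n}" by (intro card_seteq) auto
  have "j \<in> ?I" and last: "n - 1 \<in> ?I" using I j by auto
  then show "j < m" by simp
  have "f (n - 1) < n" using last pivot(1)[of "n - 1"] by auto
  moreover have "j + (n - 1 - j) = n - 1" using j by auto
  ultimately have "f j \<le> j"
    using pivot_bound[OF dim piv, of j "n - 1 - j"] last \<open>j \<in> ?I\<close> by auto
  then show "f j = j" using f_ge[of j] \<open>j \<in> ?I\<close> by auto
qed

lemma row_echelon_form_full_col_rank_eq_rect_one:
  fixes C :: "'a::field mat"
  assumes C: "C \<in> carrier_mat m n" and ref: "row_echelon_form C" and full: "full_col_rank C"
  shows "C = rect_one_mat m n"
proof (rule eq_matI)
  from ref C obtain f where piv: "pivot_fun C f n" unfolding row_echelon_form_def by auto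
  note pivot = pivot_funD[OF _ piv] and diag = pivot_fun_full_col_rank[OF C ref piv full]
  fix i j assume "i < dim_row (rect_one_mat m n :: 'a mat)" "j < dim_col (rect_one_mat m n :: 'a mat)"
  then have ij: "i < m" "j < n" by auto
  have "j < m" "f j = j" using diag[OF ij(2)] by simp_all
  then have "C $$ (i, j) = (if i = j then 1 else 0)"
    using pivot(4)[of m j] pivot(5)[of m j i] ij C by (cases "i = j") simp_all
  then show "C $$ (i, j) = rect_one_mat m n $$ (i, j)" using ij by simp
qed (use C in auto)

lemma full_col_rank_row_reduce:
  fixes Y :: "'a::field mat"
  assumes Y: "Y \<in> carrier_mat m n" and full: "full_col_rank Y"
  obtains P where "P \<in> carrier_mat m m" "invertible_mat P"
    "P * Y = rect_one_mat m n"
proof -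
  define C where "C = gauss_jordan_single Y"
  note gj = gauss_jordan_single[OF Y C_def[symmetric]]
  obtain P Q where PQ: "C = P * Y" "P \<in> carrier_mat m m" "Q \<in> carrier_mat m m" "Q * P = 1\<^sub>m m"
    using gj(4) by blast
  have P: "invertible_mat P" using invertible_matI[OF PQ(2,3,4)] .
  have "full_col_rank C"
    using full_col_rank_mult[OF PQ(2) Y invertible_full_col_rank[OF PQ(2) P] full] PQ(1) by simp
  then show thesis
    using that[OF PQ(2) P] row_echelon_form_full_col_rank_eq_rect_one[OF gj(2,3)] PQ(1) by simp
qed

section \<open>The column permutation Q_F\<close>

lemma dim_Qperm[simp]: "dim_row (Qperm n F) = n" "dim_col (Qperm n F) = n"
  unfolding Qperm_def by simp_all

context
  fixes n :: nat and F :: "nat set"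
  assumes F: "F \<subseteq> {0..<n}"
begin

lemma finite_col_subset: "finite F"
  using F finite_subset by blast

lemma length_col_order: "length (col_order n F) = n"
  using F finite_col_subset card_mono[OF _ F]
  by (simp add: col_order_def card_Diff_subset)

lemma distinct_col_order: "distinct (col_order n F)"
  unfolding col_order_def using finite_col_subset by auto

lemma set_col_order: "set (col_order n F) = {0..<n}"
  unfolding col_order_def using finite_col_subset F by auto

lemma col_order_nth_less: "j < n \<Longrightarrow> col_order n F ! j < n"
  using set_col_order length_col_order nth_mem by fastforce

lemma col_order_nth_eq_iff: "j < n \<Longrightarrow> k < n \<Longrightarrow> col_order n F ! j = col_order n F ! k \<longleftrightarrow> j = k"
  using distinct_col_order length_col_order nth_eq_iff_index_eq by metis

lemma col_order_nth_mem_iff: "j < n \<Longrightarrow> col_order n F ! j \<in> F \<longleftrightarrow> j < card F"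
proof -
  assume j: "j < n"
  let ?G = "sorted_list_of_set F" and ?H = "sorted_list_of_set ({0..<n} - F)"
  show ?thesis
  proof (cases "j < card F")
    case True
    then have "col_order n F ! j = ?G ! j" by (simp add: col_order_def nth_append)
    then show ?thesis
      using True finite_col_subset by (metis length_sorted_list_of_set nth_mem set_sorted_list_of_set)
  next
    case False
    then have "col_order n F ! j = ?H ! (j - card F)" by (simp add: col_order_def nth_append)
    moreover have "j - card F < length ?H"
      using length_col_order j False by (simp add: col_order_def)
    ultimately have "col_order n F ! j \<in> {0..<n} - F"
      by (metis nth_mem set_sorted_list_of_set finite_Diff finite_atLeastLessThan)
    then show ?thesis using False by simp
  qed
qed

lemma col_order_surj: "i < n \<Longrightarrow> \<exists>j < n. col_order n F ! j = i"
  using set_col_order length_col_order by (metis atLeastLessThan_iff in_set_conv_nth zero_le)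

lemma Qperm_carrier: "(Qperm n F :: 'a::zero_neq_one mat) \<in> carrier_mat n n"
  unfolding Qperm_def by simp

lemma index_mult_Qperm:
  assumes B: "(B :: 'a::semiring_1 mat) \<in> carrier_mat m n" and i: "i < m" and j: "j < n"
  shows "(B * Qperm n F) $$ (i, j) = B $$ (i, col_order n F ! j)"
proof -
  have "(B * Qperm n F) $$ (i, j)
      = (\<Sum>k\<in>{0..<n}. B $$ (i, k) * (if k = col_order n F ! j then 1 else 0))"
    using B i j by (simp add: Qperm_def scalar_prod_def)
  also have "\<dots> = B $$ (i, col_order n F ! j)"
    using col_order_nth_less[OF j] by (simp add: if_distrib[of "\<lambda>x. _ * x"] cong: if_cong)
  finally show ?thesis .
qed

lemma mult_Qperm_lower_left_zero_iff:
  assumes A: "(A :: 'a::semiring_1 mat) \<in> carrier_mat m n"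
  shows "(\<forall>i j. s \<le> i \<and> i < m \<and> j < card F \<longrightarrow> (A * Qperm n F) $$ (i, j) = 0)
    \<longleftrightarrow> (\<forall>f \<in> F. \<forall>i. s \<le> i \<and> i < m \<longrightarrow> A $$ (i, f) = 0)"
proof -
  have "card F \<le> n" using subset_eq_atLeast0_lessThan_card[OF F] .
  then have "(A * Qperm n F) $$ (i, j) = A $$ (i, col_order n F ! j)"
    if "i < m" "j < card F" for i j
    using index_mult_Qperm[OF A] that by simp
  moreover have "col_order n F ! j \<in> F" if "j < card F" for j
    using col_order_nth_mem_iff that \<open>card F \<le> n\<close> by simp
  moreover have "\<exists>j < card F. col_order n F ! j = f" if f: "f \<in> F" for f
  proof -
    have "f < n" using f F by auto
    then obtain j where "j < n" "col_order n F ! j = f" using col_order_surj by blast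
    then show ?thesis using col_order_nth_mem_iff f by auto
  qed
  ultimately show ?thesis by metis
qed

lemma transpose_Qperm_mult_vec:
  assumes y: "(y :: 'a::semiring_1 vec) \<in> carrier_vec n" and k: "k < n"
  shows "(transpose_mat (Qperm n F) *\<^sub>v y) $ k = y $ (col_order n F ! k)"
proof -
  have "(transpose_mat (Qperm n F) *\<^sub>v y) $ k
      = (\<Sum>i\<in>{0..<n}. (if i = col_order n F ! k then 1 else 0) * y $ i)"
    using y k by (simp add: Qperm_def scalar_prod_def)
  also have "\<dots> = y $ (col_order n F ! k)"
    using col_order_nth_less[OF k] by (simp add: if_distrib[of "\<lambda>x. x * _"] cong: if_cong)
  finally show ?thesis .
qed

lemma transpose_Qperm_mult_Qperm: "transpose_mat (Qperm n F) * Qperm n F = (1\<^sub>m n :: 'a::semiring_1 mat)"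
proof (rule eq_matI)
  fix i j assume "i < dim_row (1\<^sub>m n :: 'a mat)" "j < dim_col (1\<^sub>m n :: 'a mat)"
  then have ij: "i < n" "j < n" by auto
  have "(transpose_mat (Qperm n F) * Qperm n F :: 'a mat) $$ (i, j)
      = (transpose_mat (Qperm n F) *\<^sub>v col (Qperm n F) j) $ i"
    using ij by (simp add: Qperm_def)
  also have "\<dots> = (Qperm n F :: 'a mat) $$ (col_order n F ! i, j)"
    using transpose_Qperm_mult_vec[of "col (Qperm n F) j" i] ij col_order_nth_less[OF ij(1)]
    by (simp add: Qperm_def)
  also have "\<dots> = 1\<^sub>m n $$ (i, j)"
    using ij col_order_nth_less col_order_nth_eq_iff by (simp add: Qperm_def)
  finally show "(transpose_mat (Qperm n F) * Qperm n F) $$ (i, j) = (1\<^sub>m n :: 'a mat) $$ (i, j)" .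
qed (use Qperm_carrier in auto)

lemma invertible_Qperm: "invertible_mat (Qperm n F :: 'a::field mat)"
  using invertible_matI[OF Qperm_carrier _ transpose_Qperm_mult_Qperm] Qperm_carrier by simp

end

section \<open>Completions of ACI-matrices\<close>

lemma aci_eval_carrier[simp]: "aci_eval M a \<in> carrier_mat (aci_rows M) (aci_cols M)"
  and dim_aci_eval[simp]: "dim_row (aci_eval M a) = aci_rows M" "dim_col (aci_eval M a) = aci_cols M"
  unfolding aci_eval_def by simp_all

lemma index_aci_eval:
  "i < aci_rows M \<Longrightarrow> j < aci_cols M \<Longrightarrow>
    aci_eval M a $$ (i, j) = fst M $$ (i, j) + (\<Sum>v<length (snd M). a v * (snd M ! v) $$ (i, j))"
  unfolding aci_eval_def by simp

lemma aci_coeff_carrier: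
  "is_aci M \<Longrightarrow> B \<in> set (fst M # snd M) \<Longrightarrow> B \<in> carrier_mat (aci_rows M) (aci_cols M)"
  unfolding is_aci_def aci_rows_def aci_cols_def by auto

lemma aci_dims_lmult[simp]:
  "aci_rows (aci_lmult R M) = dim_row R" "aci_cols (aci_lmult R M) = aci_cols M"
  "length (snd (aci_lmult R M)) = length (snd M)"
  unfolding aci_lmult_def aci_rows_def aci_cols_def by simp_all

lemma aci_dims_rmult[simp]:
  "aci_rows (aci_rmult M Q) = aci_rows M" "aci_cols (aci_rmult M Q) = dim_col Q"
  "length (snd (aci_rmult M Q)) = length (snd M)"
  unfolding aci_rmult_def aci_rows_def aci_cols_def by simp_all

lemma aci_eval_lmult:
  fixes M :: "'a::field aci"
  assumes M: "is_aci M" and R: "R \<in> carrier_mat k (aci_rows M)"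
  shows "aci_eval (aci_lmult R M) a = R * aci_eval M a"
proof (rule eq_matI)
  let ?m = "aci_rows M" and ?n = "aci_cols M" and ?V = "{..<length (snd M)}"
  fix i j assume "i < dim_row (R * aci_eval M a)" "j < dim_col (R * aci_eval M a)"
  then have i: "i < k" and j: "j < ?n" using R by auto
  have mult: "(R * B) $$ (i, j) = (\<Sum>l\<in>{0..<?m}. R $$ (i, l) * B $$ (l, j))"
    if "B \<in> carrier_mat ?m ?n" for B
    using that R i j by (simp add: scalar_prod_def)
  have coeffs: "fst M \<in> carrier_mat ?m ?n" "\<And>v. v \<in> ?V \<Longrightarrow> snd M ! v \<in> carrier_mat ?m ?n"
    using aci_coeff_carrier[OF M] by auto
  have "aci_eval (aci_lmult R M) a $$ (i, j)
      = (R * fst M) $$ (i, j) + (\<Sum>v\<in>?V. a v * (R * snd M ! v) $$ (i, j))"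
    using i j R by (subst index_aci_eval) (auto simp: aci_lmult_def aci_rows_def aci_cols_def)
  also have "\<dots> = (\<Sum>l\<in>{0..<?m}. R $$ (i, l) * fst M $$ (l, j))
      + (\<Sum>v\<in>?V. a v * (\<Sum>l\<in>{0..<?m}. R $$ (i, l) * (snd M ! v) $$ (l, j)))"
    using mult coeffs by simp
  also have "\<dots> = (\<Sum>l\<in>{0..<?m}. R $$ (i, l) * aci_eval M a $$ (l, j))"
    using j by (simp add: index_aci_eval sum_distrib_left sum.distrib
        sum.swap[of _ "{0..<?m}"] algebra_simps)
  also have "\<dots> = (R * aci_eval M a) $$ (i, j)" using mult[OF aci_eval_carrier] ..
  finally show "aci_eval (aci_lmult R M) a $$ (i, j) = (R * aci_eval M a) $$ (i, j)" .
qed (use R in \<open>simp_all add: aci_eval_def\<close>)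

lemma aci_eval_rmult:
  fixes M :: "'a::field aci"
  assumes M: "\<forall>B \<in> set (snd M). B \<in> carrier_mat (aci_rows M) (aci_cols M)"
    and Q: "Q \<in> carrier_mat (aci_cols M) l"
  shows "aci_eval (aci_rmult M Q) a = aci_eval M a * Q"
proof (rule eq_matI)
  let ?m = "aci_rows M" and ?n = "aci_cols M" and ?V = "{..<length (snd M)}"
  fix i j assume "i < dim_row (aci_eval M a * Q)" "j < dim_col (aci_eval M a * Q)"
  then have i: "i < ?m" and j: "j < l" using Q by auto
  have mult: "(B * Q) $$ (i, j) = (\<Sum>k\<in>{0..<?n}. B $$ (i, k) * Q $$ (k, j))"
    if "B \<in> carrier_mat ?m ?n" for B
    using that Q i j by (simp add: scalar_prod_def)
  have coeffs: "fst M \<in> carrier_mat ?m ?n" "\<And>v. v \<in> ?V \<Longrightarrow> snd M ! v \<in> carrier_mat ?m ?n"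
    using M by (auto simp: aci_rows_def aci_cols_def)
  have "aci_eval (aci_rmult M Q) a $$ (i, j)
      = (fst M * Q) $$ (i, j) + (\<Sum>v\<in>?V. a v * (snd M ! v * Q) $$ (i, j))"
    using i j Q by (subst index_aci_eval) (auto simp: aci_rmult_def aci_rows_def aci_cols_def)
  also have "\<dots> = (\<Sum>k\<in>{0..<?n}. fst M $$ (i, k) * Q $$ (k, j))
      + (\<Sum>v\<in>?V. a v * (\<Sum>k\<in>{0..<?n}. (snd M ! v) $$ (i, k) * Q $$ (k, j)))"
    using mult coeffs by simp
  also have "\<dots> = (\<Sum>k\<in>{0..<?n}. aci_eval M a $$ (i, k) * Q $$ (k, j))"
    using i by (simp add: index_aci_eval sum_distrib_left sum_distrib_right sum.distrib
        sum.swap[of _ "{0..<?n}"] algebra_simps)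
  also have "\<dots> = (aci_eval M a * Q) $$ (i, j)" using mult[OF aci_eval_carrier] ..
  finally show "aci_eval (aci_rmult M Q) a $$ (i, j) = (aci_eval M a * Q) $$ (i, j)" .
qed (use Q in \<open>simp_all add: aci_eval_def\<close>)

lemma aci_eval_lmult_rmult:
  fixes M :: "'a::field aci"
  assumes M: "is_aci M" and R: "R \<in> carrier_mat k (aci_rows M)"
    and Q: "Q \<in> carrier_mat (aci_cols M) l"
  shows "aci_eval (aci_rmult (aci_lmult R M) Q) a = R * aci_eval M a * Q"
proof -
  have "\<forall>B \<in> set (snd (aci_lmult R M)). B \<in> carrier_mat k (aci_cols M)"
    using aci_coeff_carrier[OF M] R by (auto simp: aci_lmult_def)
  then show ?thesis
    using aci_eval_rmult[of "aci_lmult R M" Q] aci_eval_lmult[OF M R] R Q by simp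
qed

lemma aci_dims_block[simp]:
  "aci_rows (aci_block N r0 r1 c0 c1) = r1 - r0" "aci_cols (aci_block N r0 r1 c0 c1) = c1 - c0"
  unfolding aci_block_def aci_rows_def aci_cols_def Let_def by simp_all

lemma aci_eval_block:
  assumes "r1 \<le> aci_rows N" "c1 \<le> aci_cols N"
  shows "aci_eval (aci_block N r0 r1 c0 c1) a = block_mat (aci_eval N a) r0 r1 c0 c1"
proof -
  note dims = aci_dims_block[of N r0 r1 c0 c1]
  show ?thesis
  proof (rule eq_matI)
    fix i j assume "i < dim_row (block_mat (aci_eval N a) r0 r1 c0 c1)"
      "j < dim_col (block_mat (aci_eval N a) r0 r1 c0 c1)"
    then have ij: "i < r1 - r0" "j < c1 - c0" by simp_all
    let ?B = "aci_block N r0 r1 c0 c1"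
    have "aci_eval ?B a $$ (i, j)
        = fst ?B $$ (i, j) + (\<Sum>v<length (snd ?B). a v * (snd ?B ! v) $$ (i, j))"
      using ij dims by (intro index_aci_eval) simp_all
    then show "aci_eval ?B a $$ (i, j) = block_mat (aci_eval N a) r0 r1 c0 c1 $$ (i, j)"
      using ij assms by (simp add: index_aci_eval aci_block_def Let_def)
  qed (simp_all add: dims)
qed

lemma maxRank_eq_aci_cols_iff: "maxRank N = aci_cols N \<longleftrightarrow> (\<exists>a. full_col_rank (aci_eval N a))"
proof -
  let ?ranks = "range (\<lambda>a. mrank (aci_eval N a))"
  have rank_le: "mrank (aci_eval N a) \<le> aci_cols N" for a
    unfolding mrank_def using vec_space.rank_le_nc[OF aci_eval_carrier] by simp
  have rank_eq: "mrank (aci_eval N a) = aci_cols N \<longleftrightarrow> full_col_rank (aci_eval N a)" for a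
    unfolding mrank_def using vec_space.rank_eq_dim_col_iff_full_col_rank[OF aci_eval_carrier] by simp
  have "?ranks \<subseteq> {..aci_cols N}" using rank_le by auto
  then have fin: "finite ?ranks" using finite_subset by blast
  have max_in: "maxRank N \<in> ?ranks" unfolding maxRank_def using Max_in[OF fin] by blast
  have max_ge: "mrank (aci_eval N a) \<le> maxRank N" for a unfolding maxRank_def using fin by simp
  show ?thesis
  proof
    assume "maxRank N = aci_cols N"
    then obtain a where "mrank (aci_eval N a) = aci_cols N" using max_in by auto
    then show "\<exists>a. full_col_rank (aci_eval N a)" using rank_eq by blast
  next
    assume "\<exists>a. full_col_rank (aci_eval N a)"
    then obtain a where "mrank (aci_eval N a) = aci_cols N" using rank_eq by blast
    moreover have "maxRank N \<le> aci_cols N" using max_in rank_le by auto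
    ultimately show "maxRank N = aci_cols N" using max_ge[of a] by simp
  qed
qed

lemma FRmR_square_iff:
  "aci_rows N = aci_cols N \<Longrightarrow> FRmR N \<longleftrightarrow> (\<exists>a. full_col_rank (aci_eval N a))"
  unfolding FRmR_def using maxRank_eq_aci_cols_iff[of N] full_col_rank_if_dim_col_0[of "aci_eval N _"]
  by auto

lemma FCmR_tall_iff:
  "aci_cols N \<le> aci_rows N \<Longrightarrow> FCmR N \<longleftrightarrow> (\<exists>a. full_col_rank (aci_eval N a))"
  unfolding FCmR_def using maxRank_eq_aci_cols_iff[of N] full_col_rank_if_dim_col_0[of "aci_eval N _"]
  by auto

lemma aci_eval_mix_cols:
  assumes M: "is_aci M"
  obtains a where "\<And>j. j < aci_cols M \<Longrightarrow>
    col (aci_eval M a) j = col (aci_eval M (if j \<in> F then a1 else a2)) j"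
proof -
  let ?m = "aci_rows M" and ?n = "aci_cols M"
  define var_col where
    "var_col v = (SOME j. \<forall>i < ?m. \<forall>j' < ?n. j' \<noteq> j \<longrightarrow> (snd M ! v) $$ (i, j') = 0)" for v
  have var_col: "(snd M ! v) $$ (i, j) = 0"
    if "v < length (snd M)" "i < ?m" "j < ?n" "j \<noteq> var_col v" for v i j
  proof -
    have "\<exists>j. \<forall>i < ?m. \<forall>j' < ?n. j' \<noteq> j \<longrightarrow> (snd M ! v) $$ (i, j') = 0"
      using M that(1) unfolding is_aci_def by auto
    from someI_ex[OF this] show ?thesis using that unfolding var_col_def by blast
  qed
  define a where "a v = (if var_col v \<in> F then a1 v else a2 v)" for v
  show thesis
  proof (rule that)
    fix j assume j: "j < ?n"
    let ?b = "if j \<in> F then a1 else a2"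
    show "col (aci_eval M a) j = col (aci_eval M ?b) j"
    proof (rule eq_vecI)
      fix i assume "i < dim_vec (col (aci_eval M ?b) j)"
      then have i: "i < ?m" by simp
      have "a v * (snd M ! v) $$ (i, j) = ?b v * (snd M ! v) $$ (i, j)" if "v < length (snd M)" for v
        using var_col[OF that i j] by (cases "j = var_col v") (auto simp: a_def)
      then have "(\<Sum>v<length (snd M). a v * (snd M ! v) $$ (i, j))
          = (\<Sum>v<length (snd M). ?b v * (snd M ! v) $$ (i, j))"
        by (intro sum.cong) auto
      then show "col (aci_eval M a) j $ i = col (aci_eval M ?b) j $ i"
        using i j by (simp add: index_aci_eval)
    qed simp
  qed
qed

lemma mult_aci_eval_index_eq_0:
  fixes M :: "'a::field aci"
  assumes M: "is_aci M" and R: "R \<in> carrier_mat k (aci_rows M)"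
    and i: "i < k" and f: "f < aci_cols M"
    and zero: "\<And>B. B \<in> set (fst M # snd M) \<Longrightarrow> (R * B) $$ (i, f) = 0"
  shows "(R * aci_eval M a) $$ (i, f) = 0"
proof -
  have "(R * aci_eval M a) $$ (i, f) = aci_eval (aci_lmult R M) a $$ (i, f)"
    using aci_eval_lmult[OF M R] by simp
  also have "\<dots> = (R * fst M) $$ (i, f) + (\<Sum>v<length (snd M). a v * (R * snd M ! v) $$ (i, f))"
    using i f R by (subst index_aci_eval) (auto simp: aci_lmult_def aci_rows_def aci_cols_def)
  also have "\<dots> = 0" using zero by simp
  finally show ?thesis .
qed

section \<open>Semifactor sets of tall ACI-matrices\<close>

text \<open>For tall M the zero block of R M Q_F must have m - #F rows. Its vanishing says that R maps
  every coefficient column indexed by F into the first #F coordinates, and FRmR of A and FCmR of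
  C say that the corresponding blocks of R X Q_F have full column rank for some completions X.\<close>

definition semifactor_witness :: "'a::field aci \<Rightarrow> nat set \<Rightarrow> 'a mat \<Rightarrow> bool" where
  "semifactor_witness M F R \<longleftrightarrow>
     R \<in> carrier_mat (aci_rows M) (aci_rows M) \<and> invertible_mat R \<and>
     (\<forall>B \<in> set (fst M # snd M). \<forall>f \<in> F. \<forall>i.
        card F \<le> i \<and> i < aci_rows M \<longrightarrow> (R * B) $$ (i, f) = 0) \<and>
     (\<exists>a. full_col_rank
        (block_mat (R * aci_eval M a * Qperm (aci_cols M) F) 0 (card F) 0 (card F))) \<and>
     (\<exists>a. full_col_rank
        (block_mat (R * aci_eval M a * Qperm (aci_cols M) F)
          (card F) (aci_rows M) (card F) (aci_cols M)))"

lemma semifactor_set_tall_iff: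
  fixes M :: "'a::field aci"
  assumes M: "is_aci M" and tall: "aci_cols M \<le> aci_rows M"
  shows "semifactor_set M F \<longleftrightarrow> F \<subseteq> {0..<aci_cols M} \<and> (\<exists>R. semifactor_witness M F R)"
proof (cases "F \<subseteq> {0..<aci_cols M}")
  case False
  then show ?thesis unfolding semifactor_set_def by simp
next
  case F: True
  let ?m = "aci_rows M" and ?n = "aci_cols M" and ?s = "card F"
  let ?Q = "Qperm (aci_cols M) F :: 'a mat"
  let ?N = "\<lambda>R. aci_rmult (aci_lmult R M) ?Q"
  have s: "?s \<le> ?n" using subset_eq_atLeast0_lessThan_card[OF F] .
  have r_iff: "(r \<le> ?m \<and> r + ?s = max ?m ?n \<and> P) \<longleftrightarrow> (r = ?m - ?s \<and> P)" for r P
    using s tall by auto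
  have Q: "?Q \<in> carrier_mat ?n ?n" using Qperm_carrier[OF F] .
  have "(\<forall>i j. ?m - (?m - ?s) \<le> i \<and> i < ?m \<and> j < ?s \<longrightarrow>
          fst (?N R) $$ (i, j) = 0 \<and> (\<forall>B \<in> set (snd (?N R)). B $$ (i, j) = 0))
      \<longleftrightarrow> (\<forall>B \<in> set (fst M # snd M). \<forall>f \<in> F. \<forall>i. ?s \<le> i \<and> i < ?m \<longrightarrow> (R * B) $$ (i, f) = 0)"
    if R: "R \<in> carrier_mat ?m ?m" for R
  proof -
    have "(\<forall>i j. ?s \<le> i \<and> i < ?m \<and> j < ?s \<longrightarrow> (R * B * ?Q) $$ (i, j) = 0)
        \<longleftrightarrow> (\<forall>f \<in> F. \<forall>i. ?s \<le> i \<and> i < ?m \<longrightarrow> (R * B) $$ (i, f) = 0)"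
      if "B \<in> set (fst M # snd M)" for B
      using mult_Qperm_lower_left_zero_iff[OF F mult_carrier_mat[OF R aci_coeff_carrier[OF M that]]]
      by simp
    then have "(\<forall>B \<in> set (fst M # snd M). \<forall>i j. ?s \<le> i \<and> i < ?m \<and> j < ?s \<longrightarrow> (R * B * ?Q) $$ (i, j) = 0)
        \<longleftrightarrow> (\<forall>B \<in> set (fst M # snd M). \<forall>f \<in> F. \<forall>i. ?s \<le> i \<and> i < ?m \<longrightarrow> (R * B) $$ (i, f) = 0)"
      by (rule ball_cong[OF refl])
    moreover have "?m - (?m - ?s) = ?s" using s tall by simp
    ultimately show ?thesis by (auto simp: aci_lmult_def aci_rmult_def)
  qed
  moreover have "FRmR (aci_block (?N R) 0 (?m - (?m - ?s)) 0 ?s)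
      \<longleftrightarrow> (\<exists>a. full_col_rank (block_mat (R * aci_eval M a * ?Q) 0 ?s 0 ?s))"
    if R: "R \<in> carrier_mat ?m ?m" for R
    using FRmR_square_iff[of "aci_block (?N R) 0 ?s 0 ?s"] aci_eval_block[of ?s "?N R" ?s]
      aci_eval_lmult_rmult[OF M R Q] R Q s tall by simp
  moreover have "FCmR (aci_block (?N R) (?m - (?m - ?s)) ?m ?s ?n)
      \<longleftrightarrow> (\<exists>a. full_col_rank (block_mat (R * aci_eval M a * ?Q) ?s ?m ?s ?n))"
    if R: "R \<in> carrier_mat ?m ?m" for R
    using FCmR_tall_iff[of "aci_block (?N R) ?s ?m ?s ?n"] aci_eval_block[of ?m "?N R" ?n]
      aci_eval_lmult_rmult[OF M R Q] R Q s tall by simp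
  ultimately show ?thesis
    unfolding semifactor_set_def semifactor_witness_def Let_def using F r_iff by (auto cong: conj_cong)
qed

lemma semifactor_witness_lower_left_zero:
  fixes M :: "'a::field aci"
  assumes M: "is_aci M" and F: "F \<subseteq> {0..<aci_cols M}" and R: "semifactor_witness M F R"
  shows "lower_left_zero (R * aci_eval M a * Qperm (aci_cols M) F) (card F)"
  unfolding lower_left_zero_def
proof (intro allI impI, elim conjE)
  let ?m = "aci_rows M" and ?n = "aci_cols M" and ?c = "col_order (aci_cols M) F"
  have R_carrier: "R \<in> carrier_mat ?m ?m" using R unfolding semifactor_witness_def by blast
  fix i j assume i: "card F \<le> i" "i < dim_row (R * aci_eval M a * Qperm ?n F)" and j: "j < card F"
  have s: "card F \<le> ?n" using subset_eq_atLeast0_lessThan_card[OF F] .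
  then have "?c ! j \<in> F" "?c ! j < ?n" using col_order_nth_mem_iff[OF F] col_order_nth_less[OF F] j by auto
  moreover have "i < ?m" using i R_carrier by simp
  moreover have "(R * B) $$ (i, ?c ! j) = 0" if "B \<in> set (fst M # snd M)" for B
    using R that \<open>?c ! j \<in> F\<close> i(1) \<open>i < ?m\<close> unfolding semifactor_witness_def by blast
  ultimately have "(R * aci_eval M a) $$ (i, ?c ! j) = 0"
    by (intro mult_aci_eval_index_eq_0[OF M R_carrier]) auto
  then show "(R * aci_eval M a * Qperm ?n F) $$ (i, j) = 0"
    using index_mult_Qperm[OF F mult_carrier_mat[OF R_carrier aci_eval_carrier] \<open>i < ?m\<close>, of j] j s
    by simp
qed

lemma semifactor_witness_full_col_rank:
  fixes M :: "'a::field aci"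
  assumes M: "is_aci M" and tall: "aci_cols M \<le> aci_rows M" and F: "F \<subseteq> {0..<aci_cols M}"
    and R: "semifactor_witness M F R"
  obtains a where "full_col_rank (aci_eval M a)"
proof -
  let ?m = "aci_rows M" and ?n = "aci_cols M" and ?s = "card F"
  let ?Q = "Qperm (aci_cols M) F :: 'a mat"
  let ?c = "col_order ?n F" and ?X = "\<lambda>b. R * aci_eval M b * ?Q"
  have s: "?s \<le> ?m" "?s \<le> ?n" using subset_eq_atLeast0_lessThan_card[OF F] tall by simp_all
  from R obtain a1 a2 where R_carrier: "R \<in> carrier_mat ?m ?m" and R_inv: "invertible_mat R"
    and upper: "full_col_rank (block_mat (?X a1) 0 ?s 0 ?s)"
    and lower: "full_col_rank (block_mat (?X a2) ?s ?m ?s ?n)"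
    unfolding semifactor_witness_def by blast
  obtain a where mix:
    "\<And>f. f < ?n \<Longrightarrow> col (aci_eval M a) f = col (aci_eval M (if f \<in> F then a1 else a2)) f"
    using aci_eval_mix_cols[OF M] by blast
  have X: "?X b \<in> carrier_mat ?m ?n" for b
    using R_carrier Qperm_carrier[OF F] by (intro mult_carrier_mat) auto
  have X_mix: "?X a $$ (i, j) = ?X (if j < ?s then a1 else a2) $$ (i, j)" if "i < ?m" "j < ?n" for i j
  proof -
    have "?c ! j < ?n" "?c ! j \<in> F \<longleftrightarrow> j < ?s"
      using col_order_nth_less[OF F] col_order_nth_mem_iff[OF F] that by auto
    then have "col (aci_eval M a) (?c ! j) = col (aci_eval M (if j < ?s then a1 else a2)) (?c ! j)"
      using mix by simp
    then have "(R * aci_eval M a) $$ (i, ?c ! j)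
        = (R * aci_eval M (if j < ?s then a1 else a2)) $$ (i, ?c ! j)"
      using that \<open>?c ! j < ?n\<close> by (simp add: carrier_matD[OF R_carrier])
    then show ?thesis
      using index_mult_Qperm[OF F mult_carrier_mat[OF R_carrier aci_eval_carrier]] that by simp
  qed
  have "block_mat (?X a) 0 ?s 0 ?s = block_mat (?X a1) 0 ?s 0 ?s"
    using X_mix s by (intro eq_matI) auto
  moreover have "block_mat (?X a) ?s ?m ?s ?n = block_mat (?X a2) ?s ?m ?s ?n"
    using X_mix s by (intro eq_matI) auto
  ultimately have "full_col_rank (?X a)"
    using full_col_rank_block_triangular[OF X s semifactor_witness_lower_left_zero[OF M F R]] upper lower
    by simp
  then show thesis
    using that full_col_rank_mult_invertible_iff[OF aci_eval_carrier R_carrier R_inv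
        Qperm_carrier[OF F] invertible_Qperm[OF F]] by blast
qed

definition coeff_cols_in_col_span :: "'a::field mat \<Rightarrow> 'a aci \<Rightarrow> nat set \<Rightarrow> bool" where
  "coeff_cols_in_col_span X M F \<longleftrightarrow>
     (\<forall>B \<in> set (fst M # snd M). \<forall>f \<in> F. \<exists>y \<in> carrier_vec (dim_col X).
        (\<forall>j < dim_col X. j \<notin> F \<longrightarrow> y $ j = 0) \<and> X *\<^sub>v y = col B f)"

lemma coeff_cols_in_col_span_Un:
  "coeff_cols_in_col_span X M F1 \<Longrightarrow> coeff_cols_in_col_span X M F2 \<Longrightarrow>
    coeff_cols_in_col_span X M (F1 \<union> F2)"
  unfolding coeff_cols_in_col_span_def by (metis Un_iff)

lemma semifactor_witness_coeff_cols_in_col_span: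
  fixes M :: "'a::field aci"
  assumes M: "is_aci M" and tall: "aci_cols M \<le> aci_rows M" and F: "F \<subseteq> {0..<aci_cols M}"
    and R: "semifactor_witness M F R" and full: "full_col_rank (aci_eval M a)"
  shows "coeff_cols_in_col_span (aci_eval M a) M F"
  unfolding coeff_cols_in_col_span_def
proof (intro ballI)
  let ?m = "aci_rows M" and ?n = "aci_cols M" and ?s = "card F"
  let ?Q = "Qperm (aci_cols M) F :: 'a mat"
  let ?c = "col_order ?n F" and ?E = "aci_eval M a"
  let ?X = "R * ?E * ?Q"
  fix B f assume B: "B \<in> set (fst M # snd M)" and f: "f \<in> F"
  have s: "?s \<le> ?m" "?s \<le> ?n" using subset_eq_atLeast0_lessThan_card[OF F] tall by simp_all
  have R_carrier: "R \<in> carrier_mat ?m ?m" and R_inv: "invertible_mat R"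
    and zero: "\<And>i. ?s \<le> i \<Longrightarrow> i < ?m \<Longrightarrow> (R * B) $$ (i, f) = 0"
    using R B f unfolding semifactor_witness_def by blast+
  have Q: "?Q \<in> carrier_mat ?n ?n" using Qperm_carrier[OF F] .
  have B_carrier: "B \<in> carrier_mat ?m ?n" using aci_coeff_carrier[OF M B] .
  have f_less: "f < ?n" using f F by auto
  have X: "?X \<in> carrier_mat ?m ?n" using R_carrier Q by (intro mult_carrier_mat) auto
  have full_X: "full_col_rank ?X"
    using full full_col_rank_mult_invertible_iff[OF aci_eval_carrier R_carrier R_inv Q
        invertible_Qperm[OF F]] by blast
  have w: "col (R * B) f \<in> carrier_vec ?m" using col_dim[of "R * B" f] R_carrier by simp
  have w_lower: "col (R * B) f $ i = 0" if "?s \<le> i" "i < ?m" for i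
    using zero[OF that] that R_carrier B_carrier f_less by simp
  obtain z where z: "z \<in> carrier_vec ?n" "\<And>j. ?s \<le> j \<Longrightarrow> j < ?n \<Longrightarrow> z $ j = 0"
    and Xz: "?X *\<^sub>v z = col (R * B) f"
    using full_col_rank_lower_left_zero_solvable[OF X s
        semifactor_witness_lower_left_zero[OF M F R] full_X w w_lower] by blast
  define y where "y = ?Q *\<^sub>v z"
  have y: "y \<in> carrier_vec ?n" unfolding y_def using Q z(1) by (rule mult_mat_vec_carrier)
  have "y $ j = 0" if j: "j < ?n" "j \<notin> F" for j
  proof -
    obtain k where k: "k < ?n" "?c ! k = j" using col_order_surj[OF F j(1)] by blast
    then have "?s \<le> k" using col_order_nth_mem_iff[OF F k(1)] j(2) by auto
    have "transpose_mat ?Q \<in> carrier_mat ?n ?n" using Q by simp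
    then have "transpose_mat ?Q *\<^sub>v y = (transpose_mat ?Q * ?Q) *\<^sub>v z"
      unfolding y_def using assoc_mult_mat_vec Q z(1) by metis
    also have "\<dots> = z" unfolding transpose_Qperm_mult_Qperm[OF F] using z(1) by simp
    finally have "y $ j = z $ k" using transpose_Qperm_mult_vec[OF F y k(1)] k(2) by simp
    then show ?thesis using z(2)[OF \<open>?s \<le> k\<close> k(1)] by simp
  qed
  moreover have "?E *\<^sub>v y = col B f"
  proof -
    obtain S where S: "S \<in> carrier_mat ?m ?m" "S * R = 1\<^sub>m ?m"
      using invertible_matE[OF R_carrier R_inv] by blast
    have RE: "R * ?E \<in> carrier_mat ?m ?n" using R_carrier by (intro mult_carrier_mat) auto
    have "R *\<^sub>v (?E *\<^sub>v y) = (R * ?E) *\<^sub>v y"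
      using assoc_mult_mat_vec[OF R_carrier aci_eval_carrier y] ..
    also have "\<dots> = ?X *\<^sub>v z"
      unfolding y_def using assoc_mult_mat_vec[OF RE Q z(1)] ..
    also have "\<dots> = R *\<^sub>v col B f" unfolding Xz by (rule col_mult2[OF R_carrier B_carrier f_less])
    finally have "S *\<^sub>v (R *\<^sub>v (?E *\<^sub>v y)) = S *\<^sub>v (R *\<^sub>v col B f)" by simp
    moreover have "S *\<^sub>v (R *\<^sub>v v) = v" if "v \<in> carrier_vec ?m" for v
      using assoc_mult_mat_vec[OF S(1) R_carrier that] S(2) that by simp
    moreover have "?E *\<^sub>v y \<in> carrier_vec ?m" by (rule mult_mat_vec_carrier[OF aci_eval_carrier y])
    moreover have "col B f \<in> carrier_vec ?m" using col_dim[of B f] B_carrier by simp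
    ultimately show ?thesis by metis
  qed
  ultimately show "\<exists>y \<in> carrier_vec (dim_col ?E). (\<forall>j < dim_col ?E. j \<notin> F \<longrightarrow> y $ j = 0)
      \<and> ?E *\<^sub>v y = col B f"
    using y by auto
qed

lemma coeff_cols_in_col_span_semifactor_witness:
  fixes M :: "'a::field aci"
  assumes M: "is_aci M" and tall: "aci_cols M \<le> aci_rows M" and F: "F \<subseteq> {0..<aci_cols M}"
    and full: "full_col_rank (aci_eval M a)" and span: "coeff_cols_in_col_span (aci_eval M a) M F"
  obtains P where "semifactor_witness M F P"
proof -
  let ?m = "aci_rows M" and ?n = "aci_cols M" and ?s = "card F"
  let ?Q = "Qperm (aci_cols M) F :: 'a mat"
  let ?c = "col_order ?n F" and ?E = "aci_eval M a"
  let ?I = "rect_one_mat ?m ?n :: 'a mat"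
  have s: "?s \<le> ?m" "?s \<le> ?n" using subset_eq_atLeast0_lessThan_card[OF F] tall by simp_all
  have Q: "?Q \<in> carrier_mat ?n ?n" using Qperm_carrier[OF F] .
  have QT: "transpose_mat ?Q \<in> carrier_mat ?n ?n" using Q by simp
  have EQ: "?E * ?Q \<in> carrier_mat ?m ?n" using Q by (intro mult_carrier_mat) auto
  have "full_col_rank (?E * ?Q)"
    using full_col_rank_mult[OF aci_eval_carrier Q full
        invertible_full_col_rank[OF Q invertible_Qperm[OF F]]] .
  then obtain P where P: "P \<in> carrier_mat ?m ?m" "invertible_mat P" and PEQ: "P * (?E * ?Q) = ?I"
    using full_col_rank_row_reduce[OF EQ] by blast
  have zero: "(P * B) $$ (i, f) = 0"
    if B: "B \<in> set (fst M # snd M)" and f: "f \<in> F" and i: "?s \<le> i" "i < ?m" for B f i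
  proof -
    have "\<exists>y \<in> carrier_vec ?n. (\<forall>j < ?n. j \<notin> F \<longrightarrow> y $ j = 0) \<and> ?E *\<^sub>v y = col B f"
      using span B f unfolding coeff_cols_in_col_span_def dim_aci_eval by blast
    then obtain y where y: "y \<in> carrier_vec ?n" "\<And>j. j < ?n \<Longrightarrow> j \<notin> F \<Longrightarrow> y $ j = 0"
      and Ey: "?E *\<^sub>v y = col B f"
      by blast
    have B_carrier: "B \<in> carrier_mat ?m ?n" using aci_coeff_carrier[OF M B] .
    have "f < ?n" using f F by auto
    have QQT: "?Q * transpose_mat ?Q = 1\<^sub>m ?n"
      using mat_mult_left_right_inverse[OF QT Q transpose_Qperm_mult_Qperm[OF F]] .
    have QTy: "transpose_mat ?Q *\<^sub>v y \<in> carrier_vec ?n" using mult_mat_vec_carrier[OF QT y(1)] .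
    have "?E *\<^sub>v y = (?E * ?Q) *\<^sub>v (transpose_mat ?Q *\<^sub>v y)"
      using assoc_mult_mat_vec[OF Q QT y(1)] assoc_mult_mat_vec[OF aci_eval_carrier Q QTy]
      unfolding QQT using y(1) by simp
    then have "P *\<^sub>v col B f = ?I *\<^sub>v (transpose_mat ?Q *\<^sub>v y)"
      using Ey assoc_mult_mat_vec[OF P(1) EQ QTy] PEQ by simp
    moreover have "(P * B) $$ (i, f) = (P *\<^sub>v col B f) $ i"
      using P(1) B_carrier i \<open>f < ?n\<close> by simp
    moreover have "(?I *\<^sub>v (transpose_mat ?Q *\<^sub>v y)) $ i = 0"
    proof (cases "i < ?n")
      case True
      then have "?c ! i \<notin> F" "?c ! i < ?n"
        using col_order_nth_mem_iff[OF F] col_order_nth_less[OF F] i by auto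
      then show ?thesis
        using rect_one_mult_vec_index[OF QTy i(2)] transpose_Qperm_mult_vec[OF F y(1)] y(2) True
        by simp
    qed (use rect_one_mult_vec_index[OF QTy i(2)] in simp)
    ultimately show ?thesis by simp
  qed
  have PEQ': "P * ?E * ?Q = ?I" using PEQ assoc_mult_mat[OF P(1) aci_eval_carrier Q] by simp
  have "full_col_rank (block_mat (P * ?E * ?Q) 0 ?s 0 ?s)"
    unfolding PEQ' block_mat_rect_one[OF s] by (rule full_col_rank_rect_one) simp
  moreover have "full_col_rank (block_mat (P * ?E * ?Q) ?s ?m ?s ?n)"
    unfolding PEQ' block_mat_rect_one[OF order.refl order.refl]
    by (rule full_col_rank_rect_one) (use tall in simp)
  ultimately have "semifactor_witness M F P"
    unfolding semifactor_witness_def using P zero by blast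
  then show thesis by (rule that)
qed

theorem semifactor_set_iff_coeff_cols_in_col_span:
  fixes M :: "'a::field aci"
  assumes M: "is_aci M" and tall: "aci_cols M \<le> aci_rows M" and full: "full_col_rank (aci_eval M a)"
  shows "semifactor_set M F \<longleftrightarrow> F \<subseteq> {0..<aci_cols M} \<and> coeff_cols_in_col_span (aci_eval M a) M F"
  using semifactor_set_tall_iff[OF M tall]
    semifactor_witness_coeff_cols_in_col_span[OF M tall _ _ full]
    coeff_cols_in_col_span_semifactor_witness[OF M tall _ full] by metis

lemma semifactor_set_full_col_rank:
  fixes M :: "'a::field aci"
  assumes M: "is_aci M" and tall: "aci_cols M \<le> aci_rows M" and "semifactor_set M F"
  obtains a where "full_col_rank (aci_eval M a)"
  using assms semifactor_set_tall_iff[OF M tall] semifactor_witness_full_col_rank[OF M tall] by metis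

theorem theorem5p4:
  fixes M :: "'a::field aci" and F1 F2 :: "nat set"
  assumes "is_aci M"
    and "aci_cols M \<le> aci_rows M"
    and "semifactor_set M F1" and "semifactor_set M F2"
    and "F1 \<inter> F2 = {}"
  shows "semifactor_set M (F1 \<inter> F2) \<and> semifactor_set M (F1 \<union> F2)"
proof -
  obtain a where full: "full_col_rank (aci_eval M a)"
    using semifactor_set_full_col_rank[OF assms(1,2,3)] .
  note semifactor_iff = semifactor_set_iff_coeff_cols_in_col_span[OF assms(1,2) full]
  have "semifactor_set M {}"
    unfolding semifactor_iff coeff_cols_in_col_span_def by simp
  moreover have "semifactor_set M (F1 \<union> F2)"
    using assms(3,4) coeff_cols_in_col_span_Un unfolding semifactor_iff by blast
  ultimately show ?thesis using assms(5) by simp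
qed

end
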